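(* Let $\Sigma$ be an infinite alphabet and let $\mathcal{A}_1$, $\mathcal{A}_2$ be guarded variable automata (GVAs) over $\Sigma$. Then there exist GVAs over $\Sigma$ recognizing, respectively, the concatenation $L(\mathcal{A}_1)\cdot L(\mathcal{A}_2)$, the Kleene closure $L(\mathcal{A}_1)^{\star}$, and the intersection $L(\mathcal{A}_1)\cap L(\mathcal{A}_2)$. That is, the class of GVA-recognizable languages is closed under concatenation, Kleene star and intersection.
   Context: Fix an infinite alphabet $\Sigma$. A guard over a set of variables $\mathcal{X}$ (disjoint from $\Sigma$) is built by the grammar $g ::= \mathit{true} \mid \alpha=\beta \mid \alpha\neq\beta \mid g\wedge g$ with $\alpha,\beta\in\Sigma\cup\mathcal{X}$. A GVA is a tuple $\mathcal{A}=\langle\Sigma,\mathcal{X},Q,Q_0,\delta,F,\kappa\rangle$ where $\mathcal{X}$ is a finite set of variables, $Q$ a finite set of states, $Q_0\subseteq Q$ the initial states, $F\subseteq Q$ the accepting states, $\delta$ a finite set of transitions $q\xrightarrow{\alpha,g}q'$ with $q,q'\in Q$, $\alpha\in\Sigma\cup\mathcal{X}\cup\{\varepsilon\}$ and $g$ a guard, and $\kappa:\mathcal{X}\to 2^{Q}$ the refreshing function ($\kappa(x)$ is the set of states in which $x$ is freed). The finite set $\Sigma_{\mathcal{A}}$ of letters occurring in $\delta$ are the constants of $\mathcal{A}$. A configuration is a pair $(\sigma,q)$ with $q\in Q$ and $\sigma$ a partial map $\mathcal{X}\to\Sigma$ (the currently bound variables). There is a step $(\sigma,q)\xrightarrow{a}(\sigma',q')$,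 $a\in\Sigma\cup\{\varepsilon\}$, if there is a transition $q\xrightarrow{\alpha,g}q'$ and a map $\gamma$ from the variables occurring in $\alpha$ or $g$ that are not in $\mathrm{dom}(\sigma)$ to $\Sigma$ such that, with $\rho=\sigma\uplus\gamma$ (extended to be the identity on letters), $\rho$ satisfies $g$, $a=\rho(\alpha)$ if $\alpha\neq\varepsilon$ and $a=\varepsilon$ if $\alpha=\varepsilon$, and $\sigma'$ is the restriction of $\rho$ to $\{x\in\mathrm{dom}(\rho) : q'\notin\kappa(x)\}$. A word $w\in\Sigma^{\star}$ is accepted if there is a sequence of steps from $(\emptyset,q_0)$ with $q_0\in Q_0$ to some $(\sigma,q_f)$ with $q_f\in F$ whose labels concatenate to $w$; $L(\mathcal{A})$ is the set of accepted words. *)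

theory Defs
  imports Main
begin

text \<open>Guarded variable automata (GVA). Letters of type 'a (the alphabet Sigma = UNIV :: 'a set),
  variables of type 'x, states of type 'q.\<close>

datatype ('a, 'x) sym = Let 'a | Var 'x

datatype ('a, 'x) guard =
    GTrue
  | GEq "('a, 'x) sym" "('a, 'x) sym"
  | GNeq "('a, 'x) sym" "('a, 'x) sym"
  | GAnd "('a, 'x) guard" "('a, 'x) guard"

fun sym_vars :: "('a, 'x) sym \<Rightarrow> 'x set" where
  "sym_vars (Let a) = {}"
| "sym_vars (Var x) = {x}"

fun guard_vars :: "('a, 'x) guard \<Rightarrow> 'x set" where
  "guard_vars GTrue = {}"
| "guard_vars (GEq s t) = sym_vars s \<union> sym_vars t"
| "guard_vars (GNeq s t) = sym_vars s \<union> sym_vars t"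
| "guard_vars (GAnd g h) = guard_vars g \<union> guard_vars h"

text \<open>Transition label: None = epsilon, Some s = letter or variable.\<close>
definition lab_vars :: "('a, 'x) sym option \<Rightarrow> 'x set" where
  "lab_vars l = (case l of None \<Rightarrow> {} | Some s \<Rightarrow> sym_vars s)"

text \<open>Evaluation of a symbol under a (total on the relevant variables) valuation rho,
  which is the identity on letters.\<close>
fun sym_eval :: "('x \<rightharpoonup> 'a) \<Rightarrow> ('a, 'x) sym \<Rightarrow> 'a" where
  "sym_eval \<rho> (Let a) = a"
| "sym_eval \<rho> (Var x) = the (\<rho> x)"

fun guard_sat :: "('x \<rightharpoonup> 'a) \<Rightarrow> ('a, 'x) guard \<Rightarrow> bool" where
  "guard_sat \<rho> GTrue = True"
| "guard_sat \<rho> (GEq s t) = (sym_eval \<rho> s = sym_eval \<rho> t)"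
| "guard_sat \<rho> (GNeq s t) = (sym_eval \<rho> s \<noteq> sym_eval \<rho> t)"
| "guard_sat \<rho> (GAnd g h) = (guard_sat \<rho> g \<and> guard_sat \<rho> h)"

record ('a, 'x, 'q) gva =
  vars :: "'x set"
  states :: "'q set"
  init :: "'q set"
  trans :: "('q \<times> ('a, 'x) sym option \<times> ('a, 'x) guard \<times> 'q) set"
  final :: "'q set"
  refresh :: "'x \<Rightarrow> 'q set"

definition gva_wf :: "('a, 'x, 'q) gva \<Rightarrow> bool" where
  "gva_wf A \<longleftrightarrow> finite (vars A) \<and> finite (states A) \<and> init A \<subseteq> states A
     \<and> final A \<subseteq> states A \<and> finite (trans A)
     \<and> (\<forall>(q, l, g, q') \<in> trans A. q \<in> states A \<and> q' \<in> states A
            \<and> lab_vars l \<subseteq> vars A \<and> guard_vars g \<subseteq> vars A)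
     \<and> (\<forall>x. refresh A x \<subseteq> states A)"

definition gva_step :: "('a, 'x, 'q) gva \<Rightarrow> ('x \<rightharpoonup> 'a) \<times> 'q \<Rightarrow> 'a option
                        \<Rightarrow> ('x \<rightharpoonup> 'a) \<times> 'q \<Rightarrow> bool" where
  "gva_step A c lbl c' \<longleftrightarrow>
     (\<exists>l g \<rho>. (snd c, l, g, snd c') \<in> trans A
        \<and> fst c \<subseteq>\<^sub>m \<rho> \<and> dom \<rho> = dom (fst c) \<union> lab_vars l \<union> guard_vars g
        \<and> guard_sat \<rho> g
        \<and> lbl = map_option (sym_eval \<rho>) l
        \<and> fst c' = \<rho> |` {x \<in> dom \<rho>. snd c' \<notin> refresh A x})"

definition opt_word :: "'a option \<Rightarrow> 'a list" where
  "opt_word ao = (case ao of None \<Rightarrow> [] | Some a \<Rightarrow> [a])"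

inductive gva_steps :: "('a, 'x, 'q) gva \<Rightarrow> ('x \<rightharpoonup> 'a) \<times> 'q \<Rightarrow> 'a list
                        \<Rightarrow> ('x \<rightharpoonup> 'a) \<times> 'q \<Rightarrow> bool" for A where
  refl: "gva_steps A c [] c"
| step: "gva_step A c lbl c' \<Longrightarrow> gva_steps A c' w c'' \<Longrightarrow> gva_steps A c (opt_word lbl @ w) c''"

definition gva_lang :: "('a, 'x, 'q) gva \<Rightarrow> 'a list set" where
  "gva_lang A = {w. \<exists>q0 \<in> init A. \<exists>\<sigma> qf. qf \<in> final A \<and> gva_steps A (Map.empty, q0) w (\<sigma>, qf)}"

definition lang_conc :: "'a list set \<Rightarrow> 'a list set \<Rightarrow> 'a list set" where
  "lang_conc L M = {u @ v | u v. u \<in> L \<and> v \<in> M}"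

definition lang_star :: "'a list set \<Rightarrow> 'a list set" where
  "lang_star L = {concat ws | ws. set ws \<subseteq> L}"

end

theory Submission
  imports Defs
begin

text \<open>
  Each closure property is witnessed by the classical construction, adapted to refreshing.
  For concatenation, disjoint copies of the two automata are joined by \<open>\<epsilon>\<close>-transitions from
  the final states of the first to the initial states of the second. For the star, a hub state,
  initial and final, is linked by \<open>\<epsilon>\<close>-transitions to the initial states and from the final
  states; it frees every variable, so that each pass through the automaton starts from the empty
  valuation. For intersection, the product runs on the disjoint union of the variables: letter
  transitions are synchronised under a guard equating the two labels, \<open>\<epsilon>\<close>-transitions are
  interleaved.

  In all three cases a run of a component transfers to the combined automaton along the
  injective renaming \<open>Inl\<close> or \<open>Inr\<close> of its variables, and a run of the combined automaton
  projects back to runs of the components. Since variables and states are finite, they are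
  finally renamed injectively into \<open>nat\<close>.
\<close>


lemma empty_comp [simp]: "Map.empty \<circ> f = Map.empty"
  by (simp add: fun_eq_iff)

lemma restrict_map_UNIV [simp]: "m |` UNIV = m"
  by (simp add: restrict_map_def)

lemma case_sum_empty [simp]: "case_sum Map.empty Map.empty = Map.empty"
  by (simp add: fun_eq_iff split: sum.split)

lemma dom_comp: "dom (m \<circ> f) = f -` dom m"
  by (auto simp: dom_def)

lemma map_le_sum_iff: "\<tau> \<subseteq>\<^sub>m \<rho> \<longleftrightarrow> \<tau> \<circ> Inl \<subseteq>\<^sub>m \<rho> \<circ> Inl \<and> \<tau> \<circ> Inr \<subseteq>\<^sub>m \<rho> \<circ> Inr"
proof -
  have "\<tau> \<subseteq>\<^sub>m \<rho> \<longleftrightarrow> (\<forall>v. \<tau> v \<noteq> None \<longrightarrow> \<tau> v = \<rho> v)"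
    unfolding map_le_def by auto
  also have "\<dots> \<longleftrightarrow> (\<forall>x. \<tau> (Inl x) \<noteq> None \<longrightarrow> \<tau> (Inl x) = \<rho> (Inl x))
      \<and> (\<forall>y. \<tau> (Inr y) \<noteq> None \<longrightarrow> \<tau> (Inr y) = \<rho> (Inr y))"
    by (metis sum.exhaust)
  finally show ?thesis
    unfolding map_le_def by auto
qed

lemma set_eq_sum_iff: "S = T \<longleftrightarrow> Inl -` S = Inl -` T \<and> Inr -` S = Inr -` T"
  by (auto simp: set_eq_iff) (metis sum.exhaust)+


fun rename_sym :: "('x \<Rightarrow> 'y) \<Rightarrow> ('a, 'x) sym \<Rightarrow> ('a, 'y) sym" where
  "rename_sym f (Let a) = Let a"
| "rename_sym f (Var x) = Var (f x)"

fun rename_guard :: "('x \<Rightarrow> 'y) \<Rightarrow> ('a, 'x) guard \<Rightarrow> ('a, 'y) guard" where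
  "rename_guard f GTrue = GTrue"
| "rename_guard f (GEq s t) = GEq (rename_sym f s) (rename_sym f t)"
| "rename_guard f (GNeq s t) = GNeq (rename_sym f s) (rename_sym f t)"
| "rename_guard f (GAnd g h) = GAnd (rename_guard f g) (rename_guard f h)"

abbreviation rename_label :: "('x \<Rightarrow> 'y) \<Rightarrow> ('a, 'x) sym option \<Rightarrow> ('a, 'y) sym option" where
  "rename_label f \<equiv> map_option (rename_sym f)"

lemma sym_vars_rename_sym [simp]: "sym_vars (rename_sym f s) = f ` sym_vars s"
  by (cases s) auto

lemma guard_vars_rename_guard [simp]: "guard_vars (rename_guard f g) = f ` guard_vars g"
  by (induction g) auto

lemma lab_vars_simps [simp]: "lab_vars None = {}" "lab_vars (Some s) = sym_vars s"
  by (simp_all add: lab_vars_def)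

lemma lab_vars_rename_label [simp]: "lab_vars (rename_label f l) = f ` lab_vars l"
  by (cases l) auto

lemma sym_eval_rename_sym [simp]: "sym_eval \<rho> (rename_sym f s) = sym_eval (\<rho> \<circ> f) s"
  by (cases s) auto

lemma guard_sat_rename_guard [simp]: "guard_sat \<rho> (rename_guard f g) = guard_sat (\<rho> \<circ> f) g"
  by (induction g) (simp_all add: comp_def)

lemma lab_eval_rename_label [simp]:
  "map_option (sym_eval \<rho>) (rename_label f l) = map_option (sym_eval (\<rho> \<circ> f)) l"
  by (cases l) auto

lemma sym_eval_cong: "(\<And>x. x \<in> sym_vars s \<Longrightarrow> \<rho> x = \<rho>' x) \<Longrightarrow> sym_eval \<rho> s = sym_eval \<rho>' s"
  by (cases s) auto

lemma guard_sat_cong: "(\<And>x. x \<in> guard_vars g \<Longrightarrow> \<rho> x = \<rho>' x) \<Longrightarrow> guard_sat \<rho> g = guard_sat \<rho>' g"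
  by (induction g) (simp_all, (metis UnI1 UnI2 sym_eval_cong)+)

lemma lab_eval_cong:
  "(\<And>x. x \<in> lab_vars l \<Longrightarrow> \<rho> x = \<rho>' x) \<Longrightarrow> map_option (sym_eval \<rho>) l = map_option (sym_eval \<rho>') l"
  by (cases l) (auto intro: sym_eval_cong)


text \<open>\<open>\<rho>\<close> is the valuation \<open>\<sigma> \<uplus> \<gamma>\<close> of a step from \<open>\<sigma>\<close> along a transition with label \<open>l\<close>
  and guard \<open>g\<close> that reads \<open>lbl\<close>.\<close>
definition fires :: "('x \<rightharpoonup> 'a) \<Rightarrow> ('a, 'x) sym option \<Rightarrow> ('a, 'x) guard \<Rightarrow> 'a option
                     \<Rightarrow> ('x \<rightharpoonup> 'a) \<Rightarrow> bool" where
  "fires \<sigma> l g lbl \<rho> \<longleftrightarrow> \<sigma> \<subseteq>\<^sub>m \<rho> \<and> dom \<rho> = dom \<sigma> \<union> lab_vars l \<union> guard_vars g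
     \<and> guard_sat \<rho> g \<and> lbl = map_option (sym_eval \<rho>) l"

definition release :: "('a, 'x, 'q) gva \<Rightarrow> 'q \<Rightarrow> ('x \<rightharpoonup> 'a) \<Rightarrow> ('x \<rightharpoonup> 'a)" where
  "release A q \<rho> = \<rho> |` {x. q \<notin> refresh A x}"

lemma release_apply [simp]: "release A q \<rho> x = (if q \<in> refresh A x then None else \<rho> x)"
  by (simp add: release_def restrict_map_def)

lemma release_empty [simp]: "release A q Map.empty = Map.empty"
  by (simp add: fun_eq_iff)

lemma fires_eps_iff: "fires \<sigma> None GTrue lbl \<rho> \<longleftrightarrow> \<rho> = \<sigma> \<and> lbl = None"
  unfolding fires_def by (auto intro: map_le_antisym simp: map_le_def)

lemma gva_step_iff:
  "gva_step A (\<sigma>, q) lbl (\<sigma>', q') \<longleftrightarrow>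
     (\<exists>l g \<rho>. (q, l, g, q') \<in> trans A \<and> fires \<sigma> l g lbl \<rho> \<and> \<sigma>' = release A q' \<rho>)"
proof -
  have "\<rho> |` {x \<in> dom \<rho>. q' \<notin> refresh A x} = release A q' \<rho>" for \<rho> :: "'b \<rightharpoonup> 'a"
    by (auto simp: fun_eq_iff restrict_map_def)
  then show ?thesis
    unfolding gva_step_def fires_def by auto
qed

lemma gva_step_eps:
  "(q, None, GTrue, q') \<in> trans A \<Longrightarrow> gva_step A (\<sigma>, q) None (release A q' \<sigma>, q')"
  unfolding gva_step_iff using fires_eps_iff by blast

lemma fires_rename:
  assumes inj: "inj_on f V" and V: "lab_vars l \<union> guard_vars g \<subseteq> V"
    and fire: "fires ((\<tau> \<circ> f) |` V) l g lbl \<rho>"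
  obtains \<rho>' where "fires \<tau> (rename_label f l) (rename_guard f g) lbl \<rho>'"
    "\<And>x. x \<in> V \<Longrightarrow> \<rho>' (f x) = \<rho> x" "\<And>y. y \<notin> f ` V \<Longrightarrow> \<rho>' y = \<tau> y"
proof
  define \<rho>' where "\<rho>' y = (if y \<in> f ` V then \<rho> (inv_into V f y) else \<tau> y)" for y
  show on_V: "\<rho>' (f x) = \<rho> x" if "x \<in> V" for x
    using that inj by (simp add: \<rho>'_def)
  show off_V: "\<rho>' y = \<tau> y" if "y \<notin> f ` V" for y
    using that by (simp add: \<rho>'_def)
  from fire have le: "(\<tau> \<circ> f) |` V \<subseteq>\<^sub>m \<rho>"
    and dom: "dom \<rho> = dom ((\<tau> \<circ> f) |` V) \<union> lab_vars l \<union> guard_vars g"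
    and sat: "guard_sat \<rho> g" and lbl: "lbl = map_option (sym_eval \<rho>) l"
    unfolding fires_def by auto
  have "\<tau> \<subseteq>\<^sub>m \<rho>'"
    unfolding map_le_def
  proof
    fix y assume "y \<in> dom \<tau>"
    show "\<tau> y = \<rho>' y"
    proof (cases "y \<in> f ` V")
      case True
      then obtain x where "x \<in> V" "y = f x" by blast
      with le \<open>y \<in> dom \<tau>\<close> on_V show ?thesis
        unfolding map_le_def by (metis comp_apply domIff restrict_in)
    qed (simp add: off_V)
  qed
  moreover have "dom \<rho>' = dom \<tau> \<union> f ` lab_vars l \<union> f ` guard_vars g"
  proof (intro set_eqI)
    fix y
    show "y \<in> dom \<rho>' \<longleftrightarrow> y \<in> dom \<tau> \<union> f ` lab_vars l \<union> f ` guard_vars g"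
    proof (cases "y \<in> f ` V")
      case True
      then obtain x where x: "x \<in> V" "y = f x" by blast
      then have "y \<in> dom \<rho>' \<longleftrightarrow> x \<in> dom \<rho>"
        by (simp add: on_V domIff)
      also have "\<dots> \<longleftrightarrow> x \<in> dom ((\<tau> \<circ> f) |` V) \<union> lab_vars l \<union> guard_vars g"
        by (simp only: dom)
      finally show ?thesis
        using x inj V by (auto simp: inj_on_image_mem_iff)
    next
      case False
      with V show ?thesis
        by (auto simp: off_V domIff)
    qed
  qed
  moreover have "guard_sat (\<rho>' \<circ> f) g = guard_sat \<rho> g"
    "map_option (sym_eval (\<rho>' \<circ> f)) l = map_option (sym_eval \<rho>) l"
    using V on_V by (auto intro!: guard_sat_cong lab_eval_cong)
  ultimately show "fires \<tau> (rename_label f l) (rename_guard f g) lbl \<rho>'"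
    using sat lbl unfolding fires_def by simp
qed

lemma fires_unrename:
  assumes inj: "inj_on f V" and V: "lab_vars l \<union> guard_vars g \<subseteq> V"
    and fire: "fires \<tau> (rename_label f l) (rename_guard f g) lbl \<rho>"
  shows "fires ((\<tau> \<circ> f) |` V) l g lbl ((\<rho> \<circ> f) |` V)"
    and "\<And>y. y \<notin> f ` V \<Longrightarrow> \<rho> y = \<tau> y"
proof -
  from fire have le: "\<tau> \<subseteq>\<^sub>m \<rho>"
    and dom: "dom \<rho> = dom \<tau> \<union> f ` lab_vars l \<union> f ` guard_vars g"
    and sat: "guard_sat (\<rho> \<circ> f) g" and lbl: "lbl = map_option (sym_eval (\<rho> \<circ> f)) l"
    unfolding fires_def by auto
  have "(\<tau> \<circ> f) |` V \<subseteq>\<^sub>m (\<rho> \<circ> f) |` V"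
    using le by (auto simp: map_le_def restrict_map_def)
  moreover have "dom ((\<rho> \<circ> f) |` V) = dom ((\<tau> \<circ> f) |` V) \<union> lab_vars l \<union> guard_vars g"
  proof -
    have "V \<inter> f -` (f ` S) = S" if "S \<subseteq> V" for S
      using inj that unfolding inj_on_def by blast
    moreover have "dom ((m \<circ> f) |` V) = V \<inter> f -` dom m" for m :: "'b \<rightharpoonup> 'c"
      by (auto simp: dom_def restrict_map_def)
    ultimately show ?thesis
      using V by (simp add: dom vimage_Un Int_Un_distrib)
  qed
  moreover have "guard_sat ((\<rho> \<circ> f) |` V) g = guard_sat (\<rho> \<circ> f) g"
    "map_option (sym_eval ((\<rho> \<circ> f) |` V)) l = map_option (sym_eval (\<rho> \<circ> f)) l"
    using V by (auto intro!: guard_sat_cong lab_eval_cong)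
  ultimately show "fires ((\<tau> \<circ> f) |` V) l g lbl ((\<rho> \<circ> f) |` V)"
    using sat lbl unfolding fires_def by simp
  show "\<rho> y = \<tau> y" if "y \<notin> f ` V" for y
  proof -
    from that V have "y \<in> dom \<rho> \<longleftrightarrow> y \<in> dom \<tau>"
      using dom by auto
    with le show ?thesis
      unfolding map_le_def by (metis domIff)
  qed
qed


lemma opt_word_simps [simp]: "opt_word None = []" "opt_word (Some a) = [a]"
  by (simp_all add: opt_word_def)

lemma gva_steps_append:
  "gva_steps A c u c' \<Longrightarrow> gva_steps A c' v c'' \<Longrightarrow> gva_steps A c (u @ v) c''"
  by (induction rule: gva_steps.induct) (auto intro: gva_steps.step)

lemma gva_steps_single: "gva_step A c lbl c' \<Longrightarrow> gva_steps A c (opt_word lbl) c'"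
  using gva_steps.step[OF _ gva_steps.refl] by fastforce

lemma gva_steps_Cons_split:
  assumes "gva_steps A c (a # w) c'"
  obtains c1 c2 where "gva_steps A c [] c1" "gva_step A c1 (Some a) c2" "gva_steps A c2 w c'"
proof -
  have "\<exists>c1 c2. gva_steps A c [] c1 \<and> gva_step A c1 (Some a) c2 \<and> gva_steps A c2 w c'"
    if "gva_steps A c v c'" "v = a # w" for v
    using that
  proof (induction arbitrary: w rule: gva_steps.induct)
    case (step c lbl c1 v c')
    show ?case
    proof (cases lbl)
      case None
      with step obtain d1 d2 where "gva_steps A c1 [] d1" "gva_step A d1 (Some a) d2" "gva_steps A d2 w c'"
        by auto
      then show ?thesis
        using gva_steps.step[OF step(1)] None by fastforce
    qed (use step gva_steps.refl in fastforce)
  qed simp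
  then show thesis
    using assms that by blast
qed

lemma gva_steps_simulate:
  assumes "gva_steps A c w c'" "R c d"
    and "\<And>c lbl c' d. R c d \<Longrightarrow> gva_step A c lbl c' \<Longrightarrow> \<exists>d'. gva_steps B d (opt_word lbl) d' \<and> R c' d'"
  shows "\<exists>d'. gva_steps B d w d' \<and> R c' d'"
  using assms(1,2)
proof (induction arbitrary: d rule: gva_steps.induct)
  case (step c lbl c1 w c')
  then obtain d1 where "gva_steps B d (opt_word lbl) d1" "R c1 d1"
    using assms(3) by blast
  with step.IH show ?case
    using gva_steps_append by blast
qed (use gva_steps.refl in blast)

lemma gva_lang_subset_simulation:
  assumes init: "\<And>q. q \<in> init A \<Longrightarrow> \<exists>p \<in> init B. R Map.empty q Map.empty p"
    and final: "\<And>\<sigma> q \<tau> p. R \<sigma> q \<tau> p \<Longrightarrow> q \<in> final A \<Longrightarrow> p \<in> final B"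
    and step: "\<And>\<sigma> q \<tau> p lbl \<sigma>' q'. R \<sigma> q \<tau> p \<Longrightarrow> gva_step A (\<sigma>, q) lbl (\<sigma>', q') \<Longrightarrow>
                 \<exists>\<tau>' p'. gva_steps B (\<tau>, p) (opt_word lbl) (\<tau>', p') \<and> R \<sigma>' q' \<tau>' p'"
  shows "gva_lang A \<subseteq> gva_lang B"
proof
  fix w assume "w \<in> gva_lang A"
  then obtain q \<sigma> qf where "q \<in> init A" "qf \<in> final A" and run: "gva_steps A (Map.empty, q) w (\<sigma>, qf)"
    unfolding gva_lang_def by blast
  from init \<open>q \<in> init A\<close> obtain p where "p \<in> init B" "R Map.empty q Map.empty p"
    by blast
  with run step obtain \<tau> pf where "gva_steps B (Map.empty, p) w (\<tau>, pf)" "R \<sigma> qf \<tau> pf"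
    using gva_steps_simulate[OF run, of "\<lambda>(\<sigma>, q) (\<tau>, p). R \<sigma> q \<tau> p" "(Map.empty, p)" B]
    by fastforce
  with \<open>p \<in> init B\<close> \<open>qf \<in> final A\<close> final show "w \<in> gva_lang B"
    unfolding gva_lang_def by blast
qed

definition gva_conf_wf :: "('a, 'x, 'q) gva \<Rightarrow> ('x \<rightharpoonup> 'a) \<times> 'q \<Rightarrow> bool" where
  "gva_conf_wf A c \<longleftrightarrow> snd c \<in> states A \<and> (\<forall>x. snd c \<in> refresh A x \<longrightarrow> fst c x = None)"

lemma gva_wf_trans:
  "gva_wf A \<Longrightarrow> (q, l, g, q') \<in> trans A \<Longrightarrow>
     q \<in> states A \<and> q' \<in> states A \<and> lab_vars l \<subseteq> vars A \<and> guard_vars g \<subseteq> vars A"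
  unfolding gva_wf_def by blast

lemma gva_conf_wf_step: "gva_wf A \<Longrightarrow> gva_step A c lbl c' \<Longrightarrow> gva_conf_wf A c'"
  unfolding gva_conf_wf_def using gva_step_iff[of A "fst c" "snd c" lbl "fst c'" "snd c'"]
  by (auto dest: gva_wf_trans)

lemma gva_conf_wf_init: "gva_wf A \<Longrightarrow> q \<in> init A \<Longrightarrow> gva_conf_wf A (Map.empty, q)"
  unfolding gva_wf_def gva_conf_wf_def by auto

lemma release_conf_wf: "gva_conf_wf A (\<sigma>, q) \<Longrightarrow> release A q \<sigma> = \<sigma>"
  unfolding gva_conf_wf_def by (auto simp: fun_eq_iff)


section \<open>Renaming variables and states\<close>

definition rename_gva :: "('x \<Rightarrow> 'y) \<Rightarrow> ('q \<Rightarrow> 'p) \<Rightarrow> ('a, 'x, 'q) gva \<Rightarrow> ('a, 'y, 'p) gva" where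
  "rename_gva fx fq A = \<lparr> vars = fx ` vars A, states = fq ` states A, init = fq ` init A,
     trans = (\<lambda>(q, l, g, q'). (fq q, rename_label fx l, rename_guard fx g, fq q')) ` trans A,
     final = fq ` final A,
     refresh = (\<lambda>y. fq ` (\<Union>x \<in> {x \<in> vars A. fx x = y}. refresh A x)) \<rparr>"

lemma gva_wf_rename_gva: "gva_wf A \<Longrightarrow> gva_wf (rename_gva fx fq A)"
  unfolding gva_wf_def rename_gva_def by (auto; fastforce)

lemma refresh_rename_gva:
  assumes "gva_wf A" "inj_on fx (vars A)" "inj_on fq (states A)" "x \<in> vars A" "q \<in> states A"
  shows "fq q \<in> refresh (rename_gva fx fq A) (fx x) \<longleftrightarrow> q \<in> refresh A x"
proof -
  have "{x' \<in> vars A. fx x' = fx x} = {x}"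
    using assms(2,4) by (auto dest: inj_onD)
  moreover have "refresh A x \<subseteq> states A"
    using assms(1) unfolding gva_wf_def by auto
  ultimately show ?thesis
    using assms(3,5) by (auto simp: rename_gva_def inj_on_image_mem_iff)
qed

lemma rename_gva_step:
  assumes wf: "gva_wf A" and ix: "inj_on fx (vars A)" and iq: "inj_on fq (states A)"
    and step: "gva_step A ((\<tau> \<circ> fx) |` vars A, q) lbl (\<sigma>', q')"
  shows "\<exists>\<tau>'. gva_step (rename_gva fx fq A) (\<tau>, fq q) lbl (\<tau>', fq q') \<and> \<sigma>' = (\<tau>' \<circ> fx) |` vars A"
proof -
  let ?B = "rename_gva fx fq A"
  obtain l g \<rho> where t: "(q, l, g, q') \<in> trans A" and fire: "fires ((\<tau> \<circ> fx) |` vars A) l g lbl \<rho>"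
    and \<sigma>': "\<sigma>' = release A q' \<rho>"
    using step by (auto simp: gva_step_iff)
  from gva_wf_trans[OF wf t] have V: "lab_vars l \<union> guard_vars g \<subseteq> vars A" and "q' \<in> states A"
    by auto
  obtain \<rho>' where fire': "fires \<tau> (rename_label fx l) (rename_guard fx g) lbl \<rho>'"
    and on_V: "\<And>x. x \<in> vars A \<Longrightarrow> \<rho>' (fx x) = \<rho> x"
    using fires_rename[OF ix V fire] by blast
  have "(fq q, rename_label fx l, rename_guard fx g, fq q') \<in> trans ?B"
    using t by (force simp: rename_gva_def)
  with fire' have "gva_step ?B (\<tau>, fq q) lbl (release ?B (fq q') \<rho>', fq q')"
    by (auto simp: gva_step_iff)
  moreover have "dom \<rho> \<subseteq> vars A"
    using fire V unfolding fires_def by auto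
  then have "\<sigma>' = (release ?B (fq q') \<rho>' \<circ> fx) |` vars A"
    using \<open>q' \<in> states A\<close>
    by (auto simp: \<sigma>' fun_eq_iff restrict_map_def on_V refresh_rename_gva[OF wf ix iq])
  ultimately show ?thesis
    by blast
qed

lemma rename_gva_step_back:
  assumes wf: "gva_wf A" and ix: "inj_on fx (vars A)" and iq: "inj_on fq (states A)"
    and q: "q \<in> states A" and step: "gva_step (rename_gva fx fq A) (\<tau>, fq q) lbl (\<tau>', p')"
  shows "\<exists>q' \<in> states A. p' = fq q' \<and> gva_step A ((\<tau> \<circ> fx) |` vars A, q) lbl ((\<tau>' \<circ> fx) |` vars A, q')"
proof -
  let ?B = "rename_gva fx fq A"
  obtain lB gB \<rho> where tB: "(fq q, lB, gB, p') \<in> trans ?B" and fire: "fires \<tau> lB gB lbl \<rho>"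
    and \<tau>': "\<tau>' = release ?B p' \<rho>"
    using step by (auto simp: gva_step_iff)
  from tB obtain q1 l g q' where t: "(q1, l, g, q') \<in> trans A" and "fq q1 = fq q" "p' = fq q'"
    and lg: "lB = rename_label fx l" "gB = rename_guard fx g"
    unfolding rename_gva_def by auto
  from gva_wf_trans[OF wf t] have V: "lab_vars l \<union> guard_vars g \<subseteq> vars A"
    and "q1 \<in> states A" "q' \<in> states A"
    by auto
  with \<open>fq q1 = fq q\<close> q iq have "q1 = q"
    by (auto dest: inj_onD)
  have "fires ((\<tau> \<circ> fx) |` vars A) l g lbl ((\<rho> \<circ> fx) |` vars A)"
    using fires_unrename(1)[OF ix V] fire lg by simp
  moreover have "(\<tau>' \<circ> fx) |` vars A = release A q' ((\<rho> \<circ> fx) |` vars A)"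
    using \<open>q' \<in> states A\<close> \<open>p' = fq q'\<close>
    by (auto simp: \<tau>' fun_eq_iff restrict_map_def refresh_rename_gva[OF wf ix iq])
  ultimately show ?thesis
    using t \<open>q1 = q\<close> \<open>p' = fq q'\<close> \<open>q' \<in> states A\<close> by (auto simp: gva_step_iff)
qed

lemma gva_lang_rename_gva:
  assumes wf: "gva_wf A" and ix: "inj_on fx (vars A)" and iq: "inj_on fq (states A)"
  shows "gva_lang (rename_gva fx fq A) = gva_lang A"
proof
  have in_states: "init A \<subseteq> states A" "final A \<subseteq> states A"
    using wf unfolding gva_wf_def by auto
  show "gva_lang A \<subseteq> gva_lang (rename_gva fx fq A)"
    by (rule gva_lang_subset_simulation[where R = "\<lambda>\<sigma> q \<tau> p. p = fq q \<and> \<sigma> = (\<tau> \<circ> fx) |` vars A"])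
      (use rename_gva_step[OF wf ix iq] gva_steps_single in \<open>fastforce simp: rename_gva_def\<close>)+
  show "gva_lang (rename_gva fx fq A) \<subseteq> gva_lang A"
    by (rule gva_lang_subset_simulation[where
          R = "\<lambda>\<tau> p \<sigma> q. q \<in> states A \<and> p = fq q \<and> \<sigma> = (\<tau> \<circ> fx) |` vars A"])
      (use in_states iq rename_gva_step_back[OF wf ix iq] gva_steps_single
        in \<open>fastforce simp: rename_gva_def dest: inj_onD\<close>)+
qed

lemma ex_gva_nat:
  fixes A :: "('a, 'x, 'q) gva"
  assumes "gva_wf A"
  shows "\<exists>B :: ('a, nat, nat) gva. gva_wf B \<and> gva_lang B = gva_lang A"
proof -
  have "finite (vars A)" "finite (states A)"
    using assms unfolding gva_wf_def by auto
  then obtain fx :: "'x \<Rightarrow> nat" and fq :: "'q \<Rightarrow> nat" where "inj_on fx (vars A)" "inj_on fq (states A)"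
    using finite_imp_inj_to_nat_seg by metis
  with assms show ?thesis
    using gva_wf_rename_gva gva_lang_rename_gva by blast
qed


section \<open>Concatenation\<close>

definition conc_gva :: "('a, 'x1, 'q1) gva \<Rightarrow> ('a, 'x2, 'q2) gva \<Rightarrow> ('a, 'x1 + 'x2, 'q1 + 'q2) gva" where
  "conc_gva A1 A2 = \<lparr> vars = Inl ` vars A1 \<union> Inr ` vars A2, states = Inl ` states A1 \<union> Inr ` states A2,
     init = Inl ` init A1,
     trans = (\<lambda>(q, l, g, q'). (Inl q, rename_label Inl l, rename_guard Inl g, Inl q')) ` trans A1
       \<union> (\<lambda>(q, l, g, q'). (Inr q, rename_label Inr l, rename_guard Inr g, Inr q')) ` trans A2
       \<union> (\<lambda>(f, i). (Inl f, None, GTrue, Inr i)) ` (final A1 \<times> init A2),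
     final = Inr ` final A2,
     refresh = case_sum (\<lambda>x. Inl ` refresh A1 x) (\<lambda>y. Inr ` refresh A2 y) \<rparr>"

lemma conc_gva_refresh [simp]:
  "Inl q \<in> refresh (conc_gva A1 A2) (Inl x) \<longleftrightarrow> q \<in> refresh A1 x"
  "Inl q \<notin> refresh (conc_gva A1 A2) (Inr y)"
  "Inr q' \<notin> refresh (conc_gva A1 A2) (Inl x)"
  "Inr q' \<in> refresh (conc_gva A1 A2) (Inr y) \<longleftrightarrow> q' \<in> refresh A2 y"
  by (auto simp: conc_gva_def)

lemma conc_gva_transE:
  assumes "(p, l, g, p') \<in> trans (conc_gva A1 A2)"
  obtains (left) q l1 g1 q' where "(q, l1, g1, q') \<in> trans A1" "p = Inl q" "p' = Inl q'"
      "l = rename_label Inl l1" "g = rename_guard Inl g1"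
  | (right) q l2 g2 q' where "(q, l2, g2, q') \<in> trans A2" "p = Inr q" "p' = Inr q'"
      "l = rename_label Inr l2" "g = rename_guard Inr g2"
  | (bridge) f i where "f \<in> final A1" "i \<in> init A2" "p = Inl f" "p' = Inr i" "l = None" "g = GTrue"
  using assms unfolding conc_gva_def by auto

lemma gva_wf_conc_gva:
  assumes wf1: "gva_wf A1" and wf2: "gva_wf A2"
  shows "gva_wf (conc_gva A1 A2)"
proof -
  let ?C = "conc_gva A1 A2"
  have sub: "init A1 \<subseteq> states A1" "final A1 \<subseteq> states A1" "init A2 \<subseteq> states A2"
    "final A2 \<subseteq> states A2" "\<And>x. refresh A1 x \<subseteq> states A1" "\<And>x. refresh A2 x \<subseteq> states A2"
    and fin: "finite (vars A1)" "finite (vars A2)" "finite (states A1)" "finite (states A2)"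
    "finite (trans A1)" "finite (trans A2)"
    using assms unfolding gva_wf_def by auto
  have trans: "p \<in> states ?C \<and> p' \<in> states ?C \<and> lab_vars l \<subseteq> vars ?C \<and> guard_vars g \<subseteq> vars ?C"
    if "(p, l, g, p') \<in> trans ?C" for p l g p'
    using that sub
    by (cases rule: conc_gva_transE) (auto simp: conc_gva_def dest!: gva_wf_trans[OF wf1] gva_wf_trans[OF wf2])
  show ?thesis
    unfolding gva_wf_def
  proof (intro conjI)
    have "finite (final A1 \<times> init A2)"
      using sub fin by (blast intro: finite_subset)
    then show "finite (trans ?C)"
      using fin by (simp add: conc_gva_def)
    show "\<forall>(p, l, g, p') \<in> trans ?C. p \<in> states ?C \<and> p' \<in> states ?C
        \<and> lab_vars l \<subseteq> vars ?C \<and> guard_vars g \<subseteq> vars ?C"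
      using trans by blast
    show "\<forall>x. refresh ?C x \<subseteq> states ?C"
      using sub by (auto simp: conc_gva_def split: sum.split; blast)
  qed (use sub fin in \<open>auto simp: conc_gva_def\<close>)
qed

lemma conc_gva_step_left:
  assumes "gva_step A1 (\<sigma>1, q) lbl (\<sigma>1', q')"
  shows "gva_step (conc_gva A1 A2) (case_sum \<sigma>1 \<sigma>2, Inl q) lbl (case_sum \<sigma>1' \<sigma>2, Inl q')"
proof -
  obtain l g \<rho> where t: "(q, l, g, q') \<in> trans A1" and fire: "fires \<sigma>1 l g lbl \<rho>"
    and \<sigma>1': "\<sigma>1' = release A1 q' \<rho>"
    using assms by (auto simp: gva_step_iff)
  obtain \<rho>' where fire': "fires (case_sum \<sigma>1 \<sigma>2) (rename_label Inl l) (rename_guard Inl g) lbl \<rho>'"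
    and on: "\<And>x. \<rho>' (Inl x) = \<rho> x" and off: "\<And>y. y \<notin> range Inl \<Longrightarrow> \<rho>' y = case_sum \<sigma>1 \<sigma>2 y"
    by (rule fires_rename[of Inl UNIV l g "case_sum \<sigma>1 \<sigma>2" lbl \<rho>])
      (use fire in \<open>auto simp: case_sum_o_inj intro!: that\<close>)
  have "release (conc_gva A1 A2) (Inl q') \<rho>' = case_sum \<sigma>1' \<sigma>2"
  proof
    fix v show "release (conc_gva A1 A2) (Inl q') \<rho>' v = case_sum \<sigma>1' \<sigma>2 v"
      using on off[of v] by (cases v) (auto simp: \<sigma>1')
  qed
  moreover have "(Inl q, rename_label Inl l, rename_guard Inl g, Inl q') \<in> trans (conc_gva A1 A2)"
    using t by (force simp: conc_gva_def)
  ultimately show ?thesis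
    unfolding gva_step_iff using fire' by metis
qed

lemma conc_gva_step_right:
  assumes "gva_step A2 (\<sigma>2, q) lbl (\<sigma>2', q')"
  shows "gva_step (conc_gva A1 A2) (case_sum \<sigma>1 \<sigma>2, Inr q) lbl (case_sum \<sigma>1 \<sigma>2', Inr q')"
proof -
  obtain l g \<rho> where t: "(q, l, g, q') \<in> trans A2" and fire: "fires \<sigma>2 l g lbl \<rho>"
    and \<sigma>2': "\<sigma>2' = release A2 q' \<rho>"
    using assms by (auto simp: gva_step_iff)
  obtain \<rho>' where fire': "fires (case_sum \<sigma>1 \<sigma>2) (rename_label Inr l) (rename_guard Inr g) lbl \<rho>'"
    and on: "\<And>y. \<rho>' (Inr y) = \<rho> y" and off: "\<And>v. v \<notin> range Inr \<Longrightarrow> \<rho>' v = case_sum \<sigma>1 \<sigma>2 v"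
    by (rule fires_rename[of Inr UNIV l g "case_sum \<sigma>1 \<sigma>2" lbl \<rho>])
      (use fire in \<open>auto simp: case_sum_o_inj intro!: that\<close>)
  have "release (conc_gva A1 A2) (Inr q') \<rho>' = case_sum \<sigma>1 \<sigma>2'"
  proof
    fix v show "release (conc_gva A1 A2) (Inr q') \<rho>' v = case_sum \<sigma>1 \<sigma>2' v"
      using on off[of v] by (cases v) (auto simp: \<sigma>2')
  qed
  moreover have "(Inr q, rename_label Inr l, rename_guard Inr g, Inr q') \<in> trans (conc_gva A1 A2)"
    using t by (force simp: conc_gva_def)
  ultimately show ?thesis
    unfolding gva_step_iff using fire' by metis
qed

lemma conc_gva_step_bridge:
  assumes "f \<in> final A1" "i \<in> init A2"
  shows "gva_step (conc_gva A1 A2) (\<tau>, Inl f) None (case_sum (\<tau> \<circ> Inl) (release A2 i (\<tau> \<circ> Inr)), Inr i)"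
proof -
  have "(Inl f, None, GTrue, Inr i) \<in> trans (conc_gva A1 A2)"
    using assms by (force simp: conc_gva_def)
  moreover have "release (conc_gva A1 A2) (Inr i) \<tau> = case_sum (\<tau> \<circ> Inl) (release A2 i (\<tau> \<circ> Inr))"
    by (auto simp: fun_eq_iff split: sum.split)
  ultimately show ?thesis
    by (metis gva_step_eps)
qed

lemma conc_gva_step_cases:
  assumes "gva_step (conc_gva A1 A2) (\<tau>, p) lbl (\<tau>', p')"
  obtains (left) q q' where "p = Inl q" "p' = Inl q'"
      "gva_step A1 (\<tau> \<circ> Inl, q) lbl (\<tau>' \<circ> Inl, q')" "\<tau>' \<circ> Inr = \<tau> \<circ> Inr"
  | (right) q q' where "p = Inr q" "p' = Inr q'" "gva_step A2 (\<tau> \<circ> Inr, q) lbl (\<tau>' \<circ> Inr, q')"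
  | (bridge) f i where "p = Inl f" "p' = Inr i" "f \<in> final A1" "i \<in> init A2" "lbl = None"
      "\<tau>' \<circ> Inr = release A2 i (\<tau> \<circ> Inr)"
proof -
  obtain l g \<rho> where t: "(p, l, g, p') \<in> trans (conc_gva A1 A2)" and fire: "fires \<tau> l g lbl \<rho>"
    and \<tau>': "\<tau>' = release (conc_gva A1 A2) p' \<rho>"
    using assms by (auto simp: gva_step_iff)
  from t show thesis
  proof (cases rule: conc_gva_transE)
    case (left q l1 g1 q')
    with fire have "fires (\<tau> \<circ> Inl) l1 g1 lbl (\<rho> \<circ> Inl)" "\<And>y. \<rho> (Inr y) = \<tau> (Inr y)"
      using fires_unrename[of Inl UNIV l1 g1 \<tau> lbl \<rho>] by auto
    moreover have "\<tau>' \<circ> Inl = release A1 q' (\<rho> \<circ> Inl)"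
      using left by (auto simp: \<tau>' fun_eq_iff)
    ultimately have "gva_step A1 (\<tau> \<circ> Inl, q) lbl (\<tau>' \<circ> Inl, q')"
      unfolding gva_step_iff using left by blast
    with left \<open>\<And>y. \<rho> (Inr y) = \<tau> (Inr y)\<close> show thesis
      by (intro that(1)) (auto simp: \<tau>' fun_eq_iff)
  next
    case (right q l2 g2 q')
    with fire have "fires (\<tau> \<circ> Inr) l2 g2 lbl (\<rho> \<circ> Inr)"
      using fires_unrename[of Inr UNIV l2 g2 \<tau> lbl \<rho>] by auto
    moreover have "\<tau>' \<circ> Inr = release A2 q' (\<rho> \<circ> Inr)"
      using right by (auto simp: \<tau>' fun_eq_iff)
    ultimately have "gva_step A2 (\<tau> \<circ> Inr, q) lbl (\<tau>' \<circ> Inr, q')"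
      unfolding gva_step_iff using right by blast
    with right show thesis
      by (intro that(2))
  next
    case (bridge f i)
    with fire show thesis
      by (intro that(3)) (auto simp: \<tau>' fires_eps_iff fun_eq_iff)
  qed
qed

lemma gva_steps_conc_gva_left:
  "gva_steps A1 c w c' \<Longrightarrow>
     gva_steps (conc_gva A1 A2) (case_sum (fst c) \<sigma>, Inl (snd c)) w (case_sum (fst c') \<sigma>, Inl (snd c'))"
proof (induction rule: gva_steps.induct)
  case (step c lbl c1 w c')
  then show ?case
    using gva_steps.step[OF conc_gva_step_left[of A1 "fst c" "snd c" lbl "fst c1" "snd c1" A2 \<sigma>]]
    by simp
qed (rule gva_steps.refl)

lemma gva_steps_conc_gva_right:
  "gva_steps A2 c w c' \<Longrightarrow>
     gva_steps (conc_gva A1 A2) (case_sum \<sigma> (fst c), Inr (snd c)) w (case_sum \<sigma> (fst c'), Inr (snd c'))"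
proof (induction rule: gva_steps.induct)
  case (step c lbl c1 w c')
  then show ?case
    using gva_steps.step[OF conc_gva_step_right[of A2 "fst c" "snd c" lbl "fst c1" "snd c1" A1 \<sigma>]]
    by simp
qed (rule gva_steps.refl)

lemma conc_gva_steps_from_right:
  assumes "gva_steps (conc_gva A1 A2) c w c'" "snd c = Inr q"
  shows "\<exists>q'. snd c' = Inr q' \<and> gva_steps A2 (fst c \<circ> Inr, q) w (fst c' \<circ> Inr, q')"
  using assms
proof (induction arbitrary: q rule: gva_steps.induct)
  case (refl c)
  then show ?case by (auto intro: gva_steps.refl)
next
  case (step c lbl c1 w c')
  obtain \<tau> \<tau>1 p1 where c: "c = (\<tau>, Inr q)" "c1 = (\<tau>1, p1)"
    using step.prems by (cases c, cases c1) auto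
  from step.hyps(1)[unfolded c] show ?case
  proof (cases rule: conc_gva_step_cases)
    case (right q0 q1)
    have "\<exists>q'. snd c' = Inr q' \<and> gva_steps A2 (fst c1 \<circ> Inr, q1) w (fst c' \<circ> Inr, q')"
      by (rule step.IH) (use c right in simp)
    then obtain q' where "snd c' = Inr q'" and "gva_steps A2 (\<tau>1 \<circ> Inr, q1) w (fst c' \<circ> Inr, q')"
      unfolding c fst_conv by blast
    moreover have "q0 = q"
      using right(1) by simp
    ultimately show ?thesis
      unfolding c fst_conv using gva_steps.step[OF right(3)] by blast
  qed auto
qed

lemma conc_gva_steps_split:
  assumes "gva_steps (conc_gva A1 A2) c w c'" "snd c = Inl q" "snd c' \<in> Inr ` final A2"
    and "fst c \<circ> Inr = Map.empty"
  shows "\<exists>u v \<sigma> f. w = u @ v \<and> f \<in> final A1 \<and> gva_steps A1 (fst c \<circ> Inl, q) u (\<sigma>, f) \<and> v \<in> gva_lang A2"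
  using assms
proof (induction arbitrary: q rule: gva_steps.induct)
  case (refl c)
  then show ?case by auto
next
  case (step c lbl c1 w c')
  obtain \<tau> \<tau>1 p1 where c: "c = (\<tau>, Inl q)" "c1 = (\<tau>1, p1)"
    using step.prems by (cases c, cases c1) auto
  from step.hyps(1)[unfolded c] show ?case
  proof (cases rule: conc_gva_step_cases)
    case (left q0 q1)
    have "\<exists>u v \<sigma> f. w = u @ v \<and> f \<in> final A1 \<and> gva_steps A1 (fst c1 \<circ> Inl, q1) u (\<sigma>, f) \<and> v \<in> gva_lang A2"
      by (rule step.IH) (use c left step.prems in simp_all)
    then obtain u v \<sigma> f where
      "w = u @ v" "f \<in> final A1" "gva_steps A1 (\<tau>1 \<circ> Inl, q1) u (\<sigma>, f)" "v \<in> gva_lang A2"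
      using c by auto
    moreover have "gva_steps A1 (\<tau> \<circ> Inl, q) (opt_word lbl @ u) (\<sigma>, f)"
      using gva_steps.step[OF left(3)] calculation(3) left(1) by simp
    ultimately show ?thesis
      using c by (metis append.assoc fst_conv)
  next
    case (bridge f i)
    with step.prems(3) c have "\<tau>1 \<circ> Inr = Map.empty"
      by (metis fst_conv release_empty)
    moreover obtain q' where "snd c' = Inr q'" "gva_steps A2 (\<tau>1 \<circ> Inr, i) w (fst c' \<circ> Inr, q')"
      using conc_gva_steps_from_right[OF step.hyps(2)] bridge c by auto
    ultimately have "w \<in> gva_lang A2"
      using bridge step.prems(2) unfolding gva_lang_def by auto
    moreover have "opt_word lbl @ w = [] @ w" "q \<in> final A1"
      using bridge by simp_all
    ultimately show ?thesis
      using gva_steps.refl[of A1 "(fst c \<circ> Inl, q)"] by blast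
  qed simp
qed

lemma gva_lang_conc_gva: "gva_lang (conc_gva A1 A2) = lang_conc (gva_lang A1) (gva_lang A2)"
proof
  show "gva_lang (conc_gva A1 A2) \<subseteq> lang_conc (gva_lang A1) (gva_lang A2)"
  proof
    fix w assume "w \<in> gva_lang (conc_gva A1 A2)"
    then obtain q \<tau> pf where "q \<in> init A1" "pf \<in> Inr ` final A2"
      and run: "gva_steps (conc_gva A1 A2) (Map.empty, Inl q) w (\<tau>, pf)"
      unfolding gva_lang_def by (auto simp: conc_gva_def)
    moreover from conc_gva_steps_split[OF run] this(2) obtain u v \<sigma> f where
      "w = u @ v" "f \<in> final A1" "gva_steps A1 (Map.empty, q) u (\<sigma>, f)" "v \<in> gva_lang A2"
      by auto
    ultimately show "w \<in> lang_conc (gva_lang A1) (gva_lang A2)"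
      unfolding lang_conc_def gva_lang_def by blast
  qed
  show "lang_conc (gva_lang A1) (gva_lang A2) \<subseteq> gva_lang (conc_gva A1 A2)"
  proof
    fix w assume "w \<in> lang_conc (gva_lang A1) (gva_lang A2)"
    then obtain u v q \<sigma>1 f i \<sigma>2 qf where w: "w = u @ v" and "q \<in> init A1" "f \<in> final A1"
      "i \<in> init A2" "qf \<in> final A2"
      and run1: "gva_steps A1 (Map.empty, q) u (\<sigma>1, f)" and run2: "gva_steps A2 (Map.empty, i) v (\<sigma>2, qf)"
      unfolding lang_conc_def gva_lang_def by blast
    have "gva_steps (conc_gva A1 A2) (Map.empty, Inl q) u (case_sum \<sigma>1 Map.empty, Inl f)"
      using gva_steps_conc_gva_left[OF run1, of A2 Map.empty] by simp
    moreover have "gva_step (conc_gva A1 A2) (case_sum \<sigma>1 Map.empty, Inl f) None (case_sum \<sigma>1 Map.empty, Inr i)"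
      using conc_gva_step_bridge[OF \<open>f \<in> final A1\<close> \<open>i \<in> init A2\<close>, of "case_sum \<sigma>1 Map.empty"]
      by (simp add: case_sum_o_inj)
    moreover have "gva_steps (conc_gva A1 A2) (case_sum \<sigma>1 Map.empty, Inr i) v (case_sum \<sigma>1 \<sigma>2, Inr qf)"
      using gva_steps_conc_gva_right[OF run2, of A1 \<sigma>1] by simp
    ultimately have "gva_steps (conc_gva A1 A2) (Map.empty, Inl q) (u @ opt_word None @ v) (case_sum \<sigma>1 \<sigma>2, Inr qf)"
      using gva_steps_append gva_steps.step by metis
    with \<open>q \<in> init A1\<close> \<open>qf \<in> final A2\<close> show "w \<in> gva_lang (conc_gva A1 A2)"
      unfolding gva_lang_def w by (auto simp: conc_gva_def)
  qed
qed


section \<open>Kleene star\<close>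

lemma lang_star_Nil: "[] \<in> lang_star L"
  unfolding lang_star_def by (rule CollectI, rule exI[of _ "[]"]) simp

lemma lang_star_append:
  assumes "u \<in> L" "v \<in> lang_star L"
  shows "u @ v \<in> lang_star L"
proof -
  from assms(2) obtain ws where "v = concat ws" "set ws \<subseteq> L"
    unfolding lang_star_def by auto
  with assms(1) show ?thesis
    unfolding lang_star_def by (auto intro!: exI[of _ "u # ws"])
qed

definition star_gva :: "('a, 'x, 'q) gva \<Rightarrow> ('a, 'x, 'q option) gva" where
  "star_gva A = \<lparr> vars = vars A, states = insert None (Some ` states A), init = {None},
     trans = (\<lambda>(q, l, g, q'). (Some q, l, g, Some q')) ` trans A
       \<union> (\<lambda>i. (None, None, GTrue, Some i)) ` init A \<union> (\<lambda>f. (Some f, None, GTrue, None)) ` final A,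
     final = {None},
     refresh = (\<lambda>x. insert None (Some ` refresh A x)) \<rparr>"

lemma release_star_gva [simp]:
  "release (star_gva A) (Some q) \<sigma> = release A q \<sigma>"
  "release (star_gva A) None \<sigma> = Map.empty"
  by (auto simp: fun_eq_iff star_gva_def)

lemma star_gva_transE:
  assumes "(p, l, g, p') \<in> trans (star_gva A)"
  obtains (inner) q q' where "(q, l, g, q') \<in> trans A" "p = Some q" "p' = Some q'"
  | (enter) i where "i \<in> init A" "p = None" "p' = Some i" "l = None" "g = GTrue"
  | (leave) f where "f \<in> final A" "p = Some f" "p' = None" "l = None" "g = GTrue"
  using assms unfolding star_gva_def by auto

lemma gva_wf_star_gva:
  assumes wf: "gva_wf A"
  shows "gva_wf (star_gva A)"
proof -
  have sub: "init A \<subseteq> states A" "final A \<subseteq> states A" "\<And>x. refresh A x \<subseteq> states A"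
    and fin: "finite (vars A)" "finite (states A)" "finite (trans A)"
    using wf unfolding gva_wf_def by auto
  have trans: "p \<in> states (star_gva A) \<and> p' \<in> states (star_gva A)
      \<and> lab_vars l \<subseteq> vars (star_gva A) \<and> guard_vars g \<subseteq> vars (star_gva A)"
    if "(p, l, g, p') \<in> trans (star_gva A)" for p l g p'
    using that sub by (cases rule: star_gva_transE) (auto simp: star_gva_def dest!: gva_wf_trans[OF wf])
  have "finite (init A)" "finite (final A)"
    using sub fin by (auto intro: finite_subset)
  then show ?thesis
    unfolding gva_wf_def
  proof (intro conjI)
    show "\<forall>(p, l, g, p') \<in> trans (star_gva A). p \<in> states (star_gva A) \<and> p' \<in> states (star_gva A)
        \<and> lab_vars l \<subseteq> vars (star_gva A) \<and> guard_vars g \<subseteq> vars (star_gva A)"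
      using trans by blast
    show "\<forall>x. refresh (star_gva A) x \<subseteq> states (star_gva A)"
      using sub(3) by (auto simp: star_gva_def intro: subset_insertI2 image_mono)
  qed (use fin sub in \<open>auto simp: star_gva_def\<close>)
qed

lemma star_gva_step_inner_iff:
  "gva_step (star_gva A) (\<sigma>, Some q) lbl (\<sigma>', Some q') \<longleftrightarrow> gva_step A (\<sigma>, q) lbl (\<sigma>', q')"
proof -
  have "(Some q, l, g, Some q') \<in> trans (star_gva A) \<longleftrightarrow> (q, l, g, q') \<in> trans A" for l g
    unfolding star_gva_def by (force intro: rev_image_eqI)
  then show ?thesis
    unfolding gva_step_iff by simp
qed

lemma star_gva_step_enter:
  assumes "i \<in> init A"
  shows "gva_step (star_gva A) (Map.empty, None) None (Map.empty, Some i)"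
proof -
  have "(None, None, GTrue, Some i) \<in> trans (star_gva A)"
    using assms unfolding star_gva_def by (auto intro: rev_image_eqI)
  from gva_step_eps[OF this, of Map.empty] show ?thesis
    by simp
qed

lemma star_gva_step_leave:
  assumes "f \<in> final A"
  shows "gva_step (star_gva A) (\<sigma>, Some f) None (Map.empty, None)"
proof -
  have "(Some f, None, GTrue, None) \<in> trans (star_gva A)"
    using assms unfolding star_gva_def by (auto intro: rev_image_eqI)
  from gva_step_eps[OF this, of \<sigma>] show ?thesis
    by simp
qed

lemma star_gva_step_cases:
  assumes "gva_step (star_gva A) (\<sigma>, p) lbl (\<sigma>', p')"
  obtains (inner) q q' where "p = Some q" "p' = Some q'" "gva_step A (\<sigma>, q) lbl (\<sigma>', q')"
  | (enter) i where "p = None" "p' = Some i" "i \<in> init A" "lbl = None" "\<sigma>' = release A i \<sigma>"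
  | (leave) f where "p = Some f" "p' = None" "f \<in> final A" "lbl = None" "\<sigma>' = Map.empty"
proof -
  obtain l g \<rho> where t: "(p, l, g, p') \<in> trans (star_gva A)" and fire: "fires \<sigma> l g lbl \<rho>"
    and \<sigma>': "\<sigma>' = release (star_gva A) p' \<rho>"
    using assms by (auto simp: gva_step_iff)
  from t show thesis
  proof (cases rule: star_gva_transE)
    case (inner q q')
    from assms have "gva_step A (\<sigma>, q) lbl (\<sigma>', q')"
      unfolding inner(2,3) star_gva_step_inner_iff .
    with inner(2,3) show thesis
      by (rule that(1))
  next
    case (enter i)
    with fire \<sigma>' show thesis
      by (intro that(2)) (auto simp: fires_eps_iff)
  next
    case (leave f)
    with fire \<sigma>' show thesis
      by (intro that(3)) (auto simp: fires_eps_iff)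
  qed
qed

lemma gva_steps_star_gva_inner:
  "gva_steps A c w c' \<Longrightarrow> gva_steps (star_gva A) (fst c, Some (snd c)) w (fst c', Some (snd c'))"
proof (induction rule: gva_steps.induct)
  case (step c lbl c1 w c')
  then show ?case
    using gva_steps.step[of "star_gva A" "(fst c, Some (snd c))" lbl "(fst c1, Some (snd c1))"]
    by (simp add: star_gva_step_inner_iff)
qed (rule gva_steps.refl)

text \<open>Proved jointly: a run from the hub enters \<open>A\<close>, and a run inside \<open>A\<close> returns to the hub.\<close>
lemma star_gva_steps_decompose:
  assumes "gva_steps (star_gva A) c w c'" "snd c' = None"
  shows "(c = (Map.empty, None) \<longrightarrow> w \<in> lang_star (gva_lang A))
    \<and> (\<forall>q. snd c = Some q \<longrightarrow>
         (\<exists>u v \<sigma> f. w = u @ v \<and> f \<in> final A \<and> gva_steps A (fst c, q) u (\<sigma>, f) \<and> v \<in> lang_star (gva_lang A)))"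
  using assms
proof (induction rule: gva_steps.induct)
  case (refl c)
  then show ?case
    using lang_star_Nil by auto
next
  case (step c lbl c1 w c')
  obtain \<sigma> p \<sigma>1 p1 where c: "c = (\<sigma>, p)" "c1 = (\<sigma>1, p1)"
    by fastforce
  from step.hyps(1)[unfolded c] show ?case
  proof (cases rule: star_gva_step_cases)
    case (inner q q1)
    have "\<exists>u v \<sigma>f f. w = u @ v \<and> f \<in> final A \<and> gva_steps A (\<sigma>1, q1) u (\<sigma>f, f)
        \<and> v \<in> lang_star (gva_lang A)"
      using step.IH step.prems c inner by simp
    then obtain u v \<sigma>f f where "w = u @ v" "f \<in> final A" and run: "gva_steps A (\<sigma>1, q1) u (\<sigma>f, f)"
      and "v \<in> lang_star (gva_lang A)"
      by blast
    moreover have "opt_word lbl @ w = (opt_word lbl @ u) @ v"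
      using \<open>w = u @ v\<close> by simp
    moreover note gva_steps.step[OF inner(3) run]
    ultimately have "\<exists>u v \<sigma>f f. opt_word lbl @ w = u @ v \<and> f \<in> final A
        \<and> gva_steps A (\<sigma>, q) u (\<sigma>f, f) \<and> v \<in> lang_star (gva_lang A)"
      by blast
    with inner c show ?thesis
      by simp
  next
    case (enter i)
    have "opt_word lbl @ w \<in> lang_star (gva_lang A)" if "\<sigma> = Map.empty"
    proof -
      have "\<exists>u v \<sigma>f f. w = u @ v \<and> f \<in> final A \<and> gva_steps A (Map.empty, i) u (\<sigma>f, f)
          \<and> v \<in> lang_star (gva_lang A)"
        using step.IH step.prems c enter that by simp
      then obtain u v \<sigma>f f where "w = u @ v" "f \<in> final A" "gva_steps A (Map.empty, i) u (\<sigma>f, f)"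
        and "v \<in> lang_star (gva_lang A)"
        by blast
      with enter show ?thesis
        using lang_star_append[of u "gva_lang A" v] unfolding gva_lang_def by auto
    qed
    with enter c show ?thesis
      by simp
  next
    case (leave f)
    then have "opt_word lbl @ w = [] @ w" "w \<in> lang_star (gva_lang A)"
      using step.IH step.prems c by simp_all
    then have "\<exists>u v \<sigma>f f'. opt_word lbl @ w = u @ v \<and> f' \<in> final A
        \<and> gva_steps A (\<sigma>, f) u (\<sigma>f, f') \<and> v \<in> lang_star (gva_lang A)"
      using leave gva_steps.refl[of A "(\<sigma>, f)"] by blast
    with leave c show ?thesis
      by simp
  qed
qed

lemma gva_lang_star_gva: "gva_lang (star_gva A) = lang_star (gva_lang A)"
proof
  show "gva_lang (star_gva A) \<subseteq> lang_star (gva_lang A)"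
  proof
    fix w assume "w \<in> gva_lang (star_gva A)"
    then obtain \<tau> where "gva_steps (star_gva A) (Map.empty, None) w (\<tau>, None)"
      unfolding gva_lang_def by (auto simp: star_gva_def)
    from star_gva_steps_decompose[OF this] show "w \<in> lang_star (gva_lang A)"
      by simp
  qed
  have hub: "gva_steps (star_gva A) (Map.empty, None) (concat ws) (Map.empty, None)"
    if "set ws \<subseteq> gva_lang A" for ws
    using that
  proof (induction ws)
    case Nil
    then show ?case by (simp add: gva_steps.refl)
  next
    case (Cons w ws)
    then obtain i \<sigma> f where "i \<in> init A" "f \<in> final A" and run: "gva_steps A (Map.empty, i) w (\<sigma>, f)"
      unfolding gva_lang_def by auto
    have "gva_steps (star_gva A) (Map.empty, Some i) w (\<sigma>, Some f)"
      using gva_steps_star_gva_inner[OF run] by simp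
    moreover have "gva_steps (star_gva A) (\<sigma>, Some f) (opt_word None @ concat ws) (Map.empty, None)"
      using star_gva_step_leave[OF \<open>f \<in> final A\<close>] Cons by (intro gva_steps.step) auto
    ultimately have "gva_steps (star_gva A) (Map.empty, Some i) (w @ concat ws) (Map.empty, None)"
      using gva_steps_append by fastforce
    with star_gva_step_enter[OF \<open>i \<in> init A\<close>]
    have "gva_steps (star_gva A) (Map.empty, None) (opt_word None @ w @ concat ws) (Map.empty, None)"
      by (rule gva_steps.step)
    then show ?case
      by simp
  qed
  then show "lang_star (gva_lang A) \<subseteq> gva_lang (star_gva A)"
    unfolding lang_star_def gva_lang_def by (auto simp: star_gva_def)
qed


section \<open>Intersection\<close>

definition sync_guard ::
  "('a, 'x1) sym \<Rightarrow> ('a, 'x1) guard \<Rightarrow> ('a, 'x2) sym \<Rightarrow> ('a, 'x2) guard \<Rightarrow> ('a, 'x1 + 'x2) guard" where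
  "sync_guard s1 g1 s2 g2 =
     GAnd (GAnd (rename_guard Inl g1) (rename_guard Inr g2)) (GEq (rename_sym Inl s1) (rename_sym Inr s2))"

definition prod_gva :: "('a, 'x1, 'q1) gva \<Rightarrow> ('a, 'x2, 'q2) gva \<Rightarrow> ('a, 'x1 + 'x2, 'q1 \<times> 'q2) gva" where
  "prod_gva A1 A2 = \<lparr> vars = Inl ` vars A1 \<union> Inr ` vars A2, states = states A1 \<times> states A2,
     init = init A1 \<times> init A2,
     trans = {((q1, q2), None, rename_guard Inl g, (q1', q2)) | q1 g q1' q2.
                (q1, None, g, q1') \<in> trans A1 \<and> q2 \<in> states A2}
       \<union> {((q1, q2), None, rename_guard Inr g, (q1, q2')) | q1 q2 g q2'.
                q1 \<in> states A1 \<and> (q2, None, g, q2') \<in> trans A2}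
       \<union> {((q1, q2), Some (rename_sym Inl s1), sync_guard s1 g1 s2 g2, (q1', q2')) | q1 s1 g1 q1' q2 s2 g2 q2'.
                (q1, Some s1, g1, q1') \<in> trans A1 \<and> (q2, Some s2, g2, q2') \<in> trans A2},
     final = final A1 \<times> final A2,
     refresh = case_sum (\<lambda>x. refresh A1 x \<times> states A2) (\<lambda>y. states A1 \<times> refresh A2 y) \<rparr>"

lemma prod_gva_refresh [simp]:
  "(q1, q2) \<in> refresh (prod_gva A1 A2) (Inl x) \<longleftrightarrow> q1 \<in> refresh A1 x \<and> q2 \<in> states A2"
  "(q1, q2) \<in> refresh (prod_gva A1 A2) (Inr y) \<longleftrightarrow> q1 \<in> states A1 \<and> q2 \<in> refresh A2 y"
  by (simp_all add: prod_gva_def)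

lemma release_prod_gva:
  assumes "q1 \<in> states A1" "q2 \<in> states A2"
  shows "release (prod_gva A1 A2) (q1, q2) \<rho> = case_sum (release A1 q1 (\<rho> \<circ> Inl)) (release A2 q2 (\<rho> \<circ> Inr))"
  using assms by (auto simp: fun_eq_iff split: sum.split)

lemma gva_conf_wf_prod_gva_iff:
  "gva_conf_wf (prod_gva A1 A2) (\<tau>, (q1, q2)) \<longleftrightarrow> gva_conf_wf A1 (\<tau> \<circ> Inl, q1) \<and> gva_conf_wf A2 (\<tau> \<circ> Inr, q2)"
  unfolding gva_conf_wf_def by (auto simp: prod_gva_def split: sum.split)

lemma prod_gva_transE:
  assumes "(p, l, g, p') \<in> trans (prod_gva A1 A2)"
  obtains (left) q1 g1 q1' q2 where "(q1, None, g1, q1') \<in> trans A1" "q2 \<in> states A2"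
      "p = (q1, q2)" "p' = (q1', q2)" "l = None" "g = rename_guard Inl g1"
  | (right) q1 q2 g2 q2' where "q1 \<in> states A1" "(q2, None, g2, q2') \<in> trans A2"
      "p = (q1, q2)" "p' = (q1, q2')" "l = None" "g = rename_guard Inr g2"
  | (sync) q1 s1 g1 q1' q2 s2 g2 q2' where "(q1, Some s1, g1, q1') \<in> trans A1"
      "(q2, Some s2, g2, q2') \<in> trans A2" "p = (q1, q2)" "p' = (q1', q2')"
      "l = Some (rename_sym Inl s1)" "g = sync_guard s1 g1 s2 g2"
  using assms unfolding prod_gva_def by auto

lemma fires_sync_iff:
  "fires \<tau> (Some (rename_sym Inl s1)) (sync_guard s1 g1 s2 g2) lbl \<rho> \<longleftrightarrow>
     fires (\<tau> \<circ> Inl) (Some s1) g1 lbl (\<rho> \<circ> Inl) \<and> fires (\<tau> \<circ> Inr) (Some s2) g2 lbl (\<rho> \<circ> Inr)"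
proof -
  let ?V = "dom \<tau> \<union> lab_vars (Some (rename_sym Inl s1)) \<union> guard_vars (sync_guard s1 g1 s2 g2)"
  have "Inl -` ?V = dom (\<tau> \<circ> Inl) \<union> lab_vars (Some s1) \<union> guard_vars g1"
    "Inr -` ?V = dom (\<tau> \<circ> Inr) \<union> lab_vars (Some s2) \<union> guard_vars g2"
    by (auto simp: sync_guard_def dom_comp)
  then show ?thesis
    unfolding fires_def map_le_sum_iff[of \<tau>] set_eq_sum_iff[of "dom \<rho>"] dom_comp[symmetric]
    by (simp add: sync_guard_def) blast
qed

lemma gva_wf_prod_gva:
  assumes wf1: "gva_wf A1" and wf2: "gva_wf A2"
  shows "gva_wf (prod_gva A1 A2)"
proof -
  let ?P = "prod_gva A1 A2"
  have sub: "init A1 \<subseteq> states A1" "final A1 \<subseteq> states A1" "init A2 \<subseteq> states A2"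
    "final A2 \<subseteq> states A2" "\<And>x. refresh A1 x \<subseteq> states A1" "\<And>x. refresh A2 x \<subseteq> states A2"
    and fin: "finite (vars A1)" "finite (vars A2)" "finite (states A1)" "finite (states A2)"
    "finite (trans A1)" "finite (trans A2)"
    using assms unfolding gva_wf_def by auto
  have trans: "p \<in> states ?P \<and> p' \<in> states ?P \<and> lab_vars l \<subseteq> vars ?P \<and> guard_vars g \<subseteq> vars ?P"
    if "(p, l, g, p') \<in> trans ?P" for p l g p'
    using that
    by (cases rule: prod_gva_transE)
      (auto simp: prod_gva_def sync_guard_def dest!: gva_wf_trans[OF wf1] gva_wf_trans[OF wf2])
  have "trans ?P \<subseteq>
      (\<lambda>((q1, l, g, q1'), q2). ((q1, q2), rename_label Inl l, rename_guard Inl g, (q1', q2))) ` (trans A1 \<times> states A2)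
    \<union> (\<lambda>(q1, (q2, l, g, q2')). ((q1, q2), rename_label Inr l, rename_guard Inr g, (q1, q2'))) ` (states A1 \<times> trans A2)
    \<union> (\<lambda>((q1, l1, g1, q1'), (q2, l2, g2, q2')).
         ((q1, q2), rename_label Inl l1, sync_guard (the l1) g1 (the l2) g2, (q1', q2'))) ` (trans A1 \<times> trans A2)"
    unfolding prod_gva_def by (auto simp: image_iff) force+
  then have "finite (trans ?P)"
    using fin by (simp add: finite_subset)
  then show ?thesis
    unfolding gva_wf_def
  proof (intro conjI)
    show "\<forall>(p, l, g, p') \<in> trans ?P. p \<in> states ?P \<and> p' \<in> states ?P
        \<and> lab_vars l \<subseteq> vars ?P \<and> guard_vars g \<subseteq> vars ?P"
      using trans by blast
    show "\<forall>x. refresh ?P x \<subseteq> states ?P"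
      using sub(5,6) by (auto simp: prod_gva_def split: sum.split)
  qed (use sub fin in \<open>auto simp: prod_gva_def\<close>)
qed

lemma prod_gva_step_left:
  assumes wf1: "gva_wf A1" and conf2: "gva_conf_wf A2 (\<sigma>2, q2)"
    and step: "gva_step A1 (\<sigma>1, q1) None (\<sigma>1', q1')"
  shows "gva_step (prod_gva A1 A2) (case_sum \<sigma>1 \<sigma>2, (q1, q2)) None (case_sum \<sigma>1' \<sigma>2, (q1', q2))"
proof -
  obtain l g \<rho> where t: "(q1, l, g, q1') \<in> trans A1" and fire: "fires \<sigma>1 l g None \<rho>"
    and \<sigma>1': "\<sigma>1' = release A1 q1' \<rho>"
    using step by (auto simp: gva_step_iff)
  from fire have "l = None"
    unfolding fires_def by simp
  obtain \<rho>' where fire': "fires (case_sum \<sigma>1 \<sigma>2) None (rename_guard Inl g) None \<rho>'"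
    and on: "\<And>x. \<rho>' (Inl x) = \<rho> x" and off: "\<And>y. y \<notin> range Inl \<Longrightarrow> \<rho>' y = case_sum \<sigma>1 \<sigma>2 y"
    by (rule fires_rename[of Inl UNIV None g "case_sum \<sigma>1 \<sigma>2" None \<rho>])
      (use fire \<open>l = None\<close> in \<open>auto simp: case_sum_o_inj intro!: that\<close>)
  have "q1' \<in> states A1" "q2 \<in> states A2"
    using gva_wf_trans[OF wf1 t] conf2 unfolding gva_conf_wf_def by auto
  then have "release (prod_gva A1 A2) (q1', q2) \<rho>' = case_sum \<sigma>1' \<sigma>2"
    using on off[of "Inr _"] conf2
    by (auto simp: release_prod_gva \<sigma>1' fun_eq_iff gva_conf_wf_def split: sum.split)
  moreover have "((q1, q2), None, rename_guard Inl g, (q1', q2)) \<in> trans (prod_gva A1 A2)"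
    using t \<open>l = None\<close> \<open>q2 \<in> states A2\<close> by (auto simp: prod_gva_def)
  ultimately show ?thesis
    unfolding gva_step_iff using fire' by metis
qed

lemma prod_gva_step_right:
  assumes wf2: "gva_wf A2" and conf1: "gva_conf_wf A1 (\<sigma>1, q1)"
    and step: "gva_step A2 (\<sigma>2, q2) None (\<sigma>2', q2')"
  shows "gva_step (prod_gva A1 A2) (case_sum \<sigma>1 \<sigma>2, (q1, q2)) None (case_sum \<sigma>1 \<sigma>2', (q1, q2'))"
proof -
  obtain l g \<rho> where t: "(q2, l, g, q2') \<in> trans A2" and fire: "fires \<sigma>2 l g None \<rho>"
    and \<sigma>2': "\<sigma>2' = release A2 q2' \<rho>"
    using step by (auto simp: gva_step_iff)
  from fire have "l = None"
    unfolding fires_def by simp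
  obtain \<rho>' where fire': "fires (case_sum \<sigma>1 \<sigma>2) None (rename_guard Inr g) None \<rho>'"
    and on: "\<And>y. \<rho>' (Inr y) = \<rho> y" and off: "\<And>x. x \<notin> range Inr \<Longrightarrow> \<rho>' x = case_sum \<sigma>1 \<sigma>2 x"
    by (rule fires_rename[of Inr UNIV None g "case_sum \<sigma>1 \<sigma>2" None \<rho>])
      (use fire \<open>l = None\<close> in \<open>auto simp: case_sum_o_inj intro!: that\<close>)
  have "q2' \<in> states A2" "q1 \<in> states A1"
    using gva_wf_trans[OF wf2 t] conf1 unfolding gva_conf_wf_def by auto
  then have "release (prod_gva A1 A2) (q1, q2') \<rho>' = case_sum \<sigma>1 \<sigma>2'"
    using on off[of "Inl _"] conf1
    by (auto simp: release_prod_gva \<sigma>2' fun_eq_iff gva_conf_wf_def split: sum.split)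
  moreover have "((q1, q2), None, rename_guard Inr g, (q1, q2')) \<in> trans (prod_gva A1 A2)"
    using t \<open>l = None\<close> \<open>q1 \<in> states A1\<close> by (auto simp: prod_gva_def)
  ultimately show ?thesis
    unfolding gva_step_iff using fire' by metis
qed

lemma prod_gva_step_sync:
  assumes wf1: "gva_wf A1" and wf2: "gva_wf A2"
    and step1: "gva_step A1 (\<sigma>1, q1) (Some a) (\<sigma>1', q1')" and step2: "gva_step A2 (\<sigma>2, q2) (Some a) (\<sigma>2', q2')"
  shows "gva_step (prod_gva A1 A2) (case_sum \<sigma>1 \<sigma>2, (q1, q2)) (Some a) (case_sum \<sigma>1' \<sigma>2', (q1', q2'))"
proof -
  obtain l1 g1 \<rho>1 where t1: "(q1, l1, g1, q1') \<in> trans A1" and fire1: "fires \<sigma>1 l1 g1 (Some a) \<rho>1"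
    and \<sigma>1': "\<sigma>1' = release A1 q1' \<rho>1"
    using step1 by (auto simp: gva_step_iff)
  obtain l2 g2 \<rho>2 where t2: "(q2, l2, g2, q2') \<in> trans A2" and fire2: "fires \<sigma>2 l2 g2 (Some a) \<rho>2"
    and \<sigma>2': "\<sigma>2' = release A2 q2' \<rho>2"
    using step2 by (auto simp: gva_step_iff)
  obtain s1 s2 where s: "l1 = Some s1" "l2 = Some s2"
    using fire1 fire2 unfolding fires_def by (cases l1; cases l2) auto
  have "fires (case_sum \<sigma>1 \<sigma>2) (Some (rename_sym Inl s1)) (sync_guard s1 g1 s2 g2) (Some a) (case_sum \<rho>1 \<rho>2)"
    using fire1 fire2 s by (simp add: fires_sync_iff case_sum_o_inj)
  moreover have "((q1, q2), Some (rename_sym Inl s1), sync_guard s1 g1 s2 g2, (q1', q2')) \<in> trans (prod_gva A1 A2)"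
    using t1 t2 s by (auto simp: prod_gva_def)
  moreover have "q1' \<in> states A1" "q2' \<in> states A2"
    using gva_wf_trans[OF wf1 t1] gva_wf_trans[OF wf2 t2] by auto
  then have "release (prod_gva A1 A2) (q1', q2') (case_sum \<rho>1 \<rho>2) = case_sum \<sigma>1' \<sigma>2'"
    by (simp add: release_prod_gva case_sum_o_inj \<sigma>1' \<sigma>2')
  ultimately show ?thesis
    unfolding gva_step_iff by metis
qed

lemma prod_gva_step_project:
  assumes wf1: "gva_wf A1" and wf2: "gva_wf A2" and conf: "gva_conf_wf (prod_gva A1 A2) (\<tau>, (q1, q2))"
    and step: "gva_step (prod_gva A1 A2) (\<tau>, (q1, q2)) lbl (\<tau>', (q1', q2'))"
  shows "gva_steps A1 (\<tau> \<circ> Inl, q1) (opt_word lbl) (\<tau>' \<circ> Inl, q1')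
    \<and> gva_steps A2 (\<tau> \<circ> Inr, q2) (opt_word lbl) (\<tau>' \<circ> Inr, q2')"
proof -
  obtain l g \<rho> where t: "((q1, q2), l, g, (q1', q2')) \<in> trans (prod_gva A1 A2)"
    and fire: "fires \<tau> l g lbl \<rho>" and \<tau>': "\<tau>' = release (prod_gva A1 A2) (q1', q2') \<rho>"
    using step by (auto simp: gva_step_iff)
  have conf1: "gva_conf_wf A1 (\<tau> \<circ> Inl, q1)" and conf2: "gva_conf_wf A2 (\<tau> \<circ> Inr, q2)"
    using conf by (simp_all add: gva_conf_wf_prod_gva_iff)
  from t show ?thesis
  proof (cases rule: prod_gva_transE)
    case (left p1 g1 p1' p2)
    with fire have fire1: "fires (\<tau> \<circ> Inl) None g1 lbl (\<rho> \<circ> Inl)" and "\<rho> \<circ> Inr = \<tau> \<circ> Inr"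
      using fires_unrename[of Inl UNIV None g1 \<tau> lbl \<rho>] by (auto simp: fun_eq_iff)
    moreover have "q1' \<in> states A1" "q2 \<in> states A2"
      using gva_wf_trans[OF wf1 left(1)] left conf2 unfolding gva_conf_wf_def by auto
    ultimately have "\<tau>' \<circ> Inl = release A1 q1' (\<rho> \<circ> Inl)" "\<tau>' \<circ> Inr = \<tau> \<circ> Inr"
      using left release_conf_wf[OF conf2] by (simp_all add: \<tau>' release_prod_gva case_sum_o_inj)
    with left fire1 have "gva_step A1 (\<tau> \<circ> Inl, q1) lbl (\<tau>' \<circ> Inl, q1')"
      unfolding gva_step_iff by auto
    moreover have "lbl = None"
      using fire1 unfolding fires_def by simp
    ultimately show ?thesis
      using left \<open>\<tau>' \<circ> Inr = \<tau> \<circ> Inr\<close> gva_steps.refl[of A2 "(\<tau> \<circ> Inr, q2)"]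
      by (auto dest: gva_steps_single)
  next
    case (right p1 p2 g2 p2')
    with fire have fire2: "fires (\<tau> \<circ> Inr) None g2 lbl (\<rho> \<circ> Inr)" and "\<rho> \<circ> Inl = \<tau> \<circ> Inl"
      using fires_unrename[of Inr UNIV None g2 \<tau> lbl \<rho>] by (auto simp: fun_eq_iff)
    moreover have "q2' \<in> states A2" "q1 \<in> states A1"
      using gva_wf_trans[OF wf2 right(2)] right conf1 unfolding gva_conf_wf_def by auto
    ultimately have "\<tau>' \<circ> Inr = release A2 q2' (\<rho> \<circ> Inr)" "\<tau>' \<circ> Inl = \<tau> \<circ> Inl"
      using right release_conf_wf[OF conf1] by (simp_all add: \<tau>' release_prod_gva case_sum_o_inj)
    with right fire2 have "gva_step A2 (\<tau> \<circ> Inr, q2) lbl (\<tau>' \<circ> Inr, q2')"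
      unfolding gva_step_iff by auto
    moreover have "lbl = None"
      using fire2 unfolding fires_def by simp
    ultimately show ?thesis
      using right \<open>\<tau>' \<circ> Inl = \<tau> \<circ> Inl\<close> gva_steps.refl[of A1 "(\<tau> \<circ> Inl, q1)"]
      by (auto dest: gva_steps_single)
  next
    case (sync p1 s1 g1 p1' p2 s2 g2 p2')
    with fire have "fires (\<tau> \<circ> Inl) (Some s1) g1 lbl (\<rho> \<circ> Inl)" "fires (\<tau> \<circ> Inr) (Some s2) g2 lbl (\<rho> \<circ> Inr)"
      by (simp_all add: fires_sync_iff)
    moreover have "q1' \<in> states A1" "q2' \<in> states A2"
      using gva_wf_trans[OF wf1 sync(1)] gva_wf_trans[OF wf2 sync(2)] sync by auto
    then have "\<tau>' \<circ> Inl = release A1 q1' (\<rho> \<circ> Inl)" "\<tau>' \<circ> Inr = release A2 q2' (\<rho> \<circ> Inr)"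
      by (simp_all add: \<tau>' release_prod_gva case_sum_o_inj)
    ultimately have "gva_step A1 (\<tau> \<circ> Inl, q1) lbl (\<tau>' \<circ> Inl, q1')" "gva_step A2 (\<tau> \<circ> Inr, q2) lbl (\<tau>' \<circ> Inr, q2')"
      using sync unfolding gva_step_iff by auto
    then show ?thesis
      by (simp add: gva_steps_single)
  qed
qed

lemma prod_gva_steps_eps_right:
  assumes "gva_steps A2 c w c'" "w = []" "gva_wf A2" "gva_conf_wf A1 (\<sigma>1, q1)"
  shows "gva_steps (prod_gva A1 A2) (case_sum \<sigma>1 (fst c), (q1, snd c)) [] (case_sum \<sigma>1 (fst c'), (q1, snd c'))"
  using assms
proof (induction rule: gva_steps.induct)
  case (step c lbl c1 w c')
  then have "lbl = None" "w = []"
    by (cases lbl; simp)+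
  with step have "gva_step (prod_gva A1 A2) (case_sum \<sigma>1 (fst c), (q1, snd c)) None (case_sum \<sigma>1 (fst c1), (q1, snd c1))"
    using prod_gva_step_right[of A2 A1 \<sigma>1 q1 "fst c" "snd c" "fst c1" "snd c1"] by simp
  with step \<open>w = []\<close> show ?case
    using gva_steps.step[where lbl = None] by fastforce
qed (rule gva_steps.refl)

lemma prod_gva_steps_sync:
  assumes wf1: "gva_wf A1" and wf2: "gva_wf A2"
  shows "gva_steps A1 c1 w c1' \<Longrightarrow> gva_steps A2 c2 w c2' \<Longrightarrow> gva_conf_wf A1 c1 \<Longrightarrow> gva_conf_wf A2 c2 \<Longrightarrow>
    gva_steps (prod_gva A1 A2) (case_sum (fst c1) (fst c2), (snd c1, snd c2)) w
      (case_sum (fst c1') (fst c2'), (snd c1', snd c2'))"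
proof (induction arbitrary: c2 rule: gva_steps.induct)
  case (refl c1)
  then show ?case
    using prod_gva_steps_eps_right[OF refl(1) _ wf2, of A1 "fst c1" "snd c1"] by simp
next
  case (step c lbl c1 w c' c2)
  have conf1: "gva_conf_wf A1 c1"
    using gva_conf_wf_step[OF wf1 step.hyps(1)] .
  show ?case
  proof (cases lbl)
    case None
    then have "gva_step (prod_gva A1 A2) (case_sum (fst c) (fst c2), (snd c, snd c2)) None
        (case_sum (fst c1) (fst c2), (snd c1, snd c2))"
      using prod_gva_step_left[OF wf1, of A2 "fst c2" "snd c2" "fst c" "snd c" "fst c1" "snd c1"] step by simp
    with step.IH[OF _ conf1 step.prems(3)] step.prems(1) None show ?thesis
      using gva_steps.step[where lbl = None] by fastforce
  next
    case (Some a)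
    with step.prems(1) obtain d1 d2 where eps: "gva_steps A2 c2 [] d1" and sync: "gva_step A2 d1 (Some a) d2"
      and rest: "gva_steps A2 d2 w c2'"
      by (auto elim: gva_steps_Cons_split)
    have "gva_steps (prod_gva A1 A2) (case_sum (fst c) (fst c2), (snd c, snd c2)) []
        (case_sum (fst c) (fst d1), (snd c, snd d1))"
      using prod_gva_steps_eps_right[OF eps _ wf2, of A1 "fst c" "snd c"] step.prems(2) by simp
    moreover have "gva_step (prod_gva A1 A2) (case_sum (fst c) (fst d1), (snd c, snd d1)) (Some a)
        (case_sum (fst c1) (fst d2), (snd c1, snd d2))"
      using prod_gva_step_sync[OF wf1 wf2, of "fst c" "snd c" a "fst c1" "snd c1" "fst d1" "snd d1" "fst d2" "snd d2"]
        step.hyps(1) sync Some by simp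
    moreover have "gva_steps (prod_gva A1 A2) (case_sum (fst c1) (fst d2), (snd c1, snd d2)) w
        (case_sum (fst c') (fst c2'), (snd c', snd c2'))"
      using step.IH[OF rest conf1 gva_conf_wf_step[OF wf2 sync]] .
    ultimately show ?thesis
      using Some gva_steps_append[of _ _ "[]"] gva_steps.step by fastforce
  qed
qed

lemma gva_lang_prod_gva:
  assumes wf1: "gva_wf A1" and wf2: "gva_wf A2"
  shows "gva_lang (prod_gva A1 A2) = gva_lang A1 \<inter> gva_lang A2"
proof
  let ?P = "prod_gva A1 A2"
  have wf: "gva_wf ?P"
    using gva_wf_prod_gva[OF wf1 wf2] .
  have init: "gva_conf_wf ?P (Map.empty, p)" if "p \<in> init ?P" for p
    using gva_conf_wf_init[OF wf that] .
  have "gva_lang ?P \<subseteq> gva_lang A1"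
    by (rule gva_lang_subset_simulation[where
          R = "\<lambda>\<tau> p \<sigma> q. gva_conf_wf ?P (\<tau>, p) \<and> \<sigma> = \<tau> \<circ> Inl \<and> q = fst p"])
      (use init prod_gva_step_project[OF wf1 wf2] gva_conf_wf_step[OF wf] in \<open>fastforce simp: prod_gva_def\<close>)+
  moreover have "gva_lang ?P \<subseteq> gva_lang A2"
    by (rule gva_lang_subset_simulation[where
          R = "\<lambda>\<tau> p \<sigma> q. gva_conf_wf ?P (\<tau>, p) \<and> \<sigma> = \<tau> \<circ> Inr \<and> q = snd p"])
      (use init prod_gva_step_project[OF wf1 wf2] gva_conf_wf_step[OF wf] in \<open>fastforce simp: prod_gva_def\<close>)+
  ultimately show "gva_lang ?P \<subseteq> gva_lang A1 \<inter> gva_lang A2"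
    by blast
  show "gva_lang A1 \<inter> gva_lang A2 \<subseteq> gva_lang ?P"
  proof
    fix w assume "w \<in> gva_lang A1 \<inter> gva_lang A2"
    then obtain q1 q2 \<sigma>1 \<sigma>2 f1 f2 where "q1 \<in> init A1" "q2 \<in> init A2" "f1 \<in> final A1" "f2 \<in> final A2"
      and run1: "gva_steps A1 (Map.empty, q1) w (\<sigma>1, f1)" and run2: "gva_steps A2 (Map.empty, q2) w (\<sigma>2, f2)"
      unfolding gva_lang_def by blast
    moreover have "gva_steps ?P (Map.empty, (q1, q2)) w (case_sum \<sigma>1 \<sigma>2, (f1, f2))"
      using prod_gva_steps_sync[OF wf1 wf2 run1 run2] calculation(1,2)
        gva_conf_wf_init[OF wf1] gva_conf_wf_init[OF wf2]
      by simp
    moreover have "(q1, q2) \<in> init ?P" "(f1, f2) \<in> final ?P"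
      using calculation(1-4) by (simp_all add: prod_gva_def)
    ultimately show "w \<in> gva_lang ?P"
      unfolding gva_lang_def by blast
  qed
qed

theorem mainTheorem1:
  fixes A1 :: "('a, 'x1, 'q1) gva" and A2 :: "('a, 'x2, 'q2) gva"
  assumes "infinite (UNIV :: 'a set)"
    and "gva_wf A1" and "gva_wf A2"
  shows "(\<exists>B :: ('a, nat, nat) gva. gva_wf B \<and> gva_lang B = lang_conc (gva_lang A1) (gva_lang A2))
       \<and> (\<exists>B :: ('a, nat, nat) gva. gva_wf B \<and> gva_lang B = lang_star (gva_lang A1))
       \<and> (\<exists>B :: ('a, nat, nat) gva. gva_wf B \<and> gva_lang B = gva_lang A1 \<inter> gva_lang A2)"
proof (intro conjI)
  show "\<exists>B :: ('a, nat, nat) gva. gva_wf B \<and> gva_lang B = lang_conc (gva_lang A1) (gva_lang A2)"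
    using ex_gva_nat[OF gva_wf_conc_gva[OF assms(2,3)]] gva_lang_conc_gva[of A1 A2] by simp
  show "\<exists>B :: ('a, nat, nat) gva. gva_wf B \<and> gva_lang B = lang_star (gva_lang A1)"
    using ex_gva_nat[OF gva_wf_star_gva[OF assms(2)]] gva_lang_star_gva[of A1] by simp
  show "\<exists>B :: ('a, nat, nat) gva. gva_wf B \<and> gva_lang B = gva_lang A1 \<inter> gva_lang A2"
    using ex_gva_nat[OF gva_wf_prod_gva[OF assms(2,3)]] gva_lang_prod_gva[OF assms(2,3)] by simp
qed

end
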